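(* Under the CME setup, assume (B): there exist $\mathfrak f\in\mathcal G\otimes\mathcal H$ and $c\in\mathcal G$ with $\mathfrak m(x)=\mathfrak f(x)+c$ for $\mathbb P_X$-a.e. $x$ (this holds in particular under (A): $\mathfrak m\in\mathcal G\otimes\mathcal H$). Then the operator $C_V^\dagger C_{VU}:\mathcal G\to\mathcal H$ is everywhere defined and bounded, and $$\mathbb E[U|X]=\mu_U+(C_V^\dagger C_{VU})^*(\varphi(X)-\mu_V)\quad\text{a.s.}$$
   Context: CME setup: - $X:\Omega\to\mathcal X$ and $Y:\Omega\to\mathcal Y$ are random variables, with $\mathcal X$ a measurable space and $\mathcal Y$ a Borel space. - $k$ and $\ell$ are measurable symmetric positive definite kernels on $\mathcal X$ and $\mathcal Y$, with separable RKHSs $\mathcal H$ and $\mathcal G$ respectively. - The feature maps are $\varphi(x)=k(x,\cdot)$, which is assumed injective, and $\psi(y)=\ell(y,\cdot)$. - $V:=\varphi(X)\in L^2(\mathbb P;\mathcal H)$ and $U:=\psi(Y)\in L^2(\mathbb P;\mathcal G)$, with means $\mu_V,\mu_U$. - For $h\in\mathcal H$: $\|h\|_{\mathcal H}=0$ iff $h=0$ $\mathbb P_X$-a.e. - $\mathfrak m(x)=\mathbb E[U|X=x]\in L^2(\mathbb P_X;\mathcal G)$. - $\mathcal G\otimes\mathcal H$ is the Hilbert tensor product, viewed as functions $\mathcal X\to\mathcal G$ via $(g\otimes h)(x)=h(x)g$. - $C_{VU}=\mathbb E[(V-\mu_V)\otimes(U-\mu_U)]$ and $C_V=\mathbb E[(V-\mu_V)\otimes(V-\mu_V)]$,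 where $(a\otimes b)(b')=\langle b,b'\rangle a$. - $\dagger$ denotes the Moore–Penrose pseudo-inverse. *)

theory Defs
  imports "HOL-Probability.Probability"
begin

definition orthonormal_basis :: "'a::real_inner set \<Rightarrow> bool" where
  "orthonormal_basis B \<longleftrightarrow>
     (\<forall>e\<in>B. norm e = 1) \<and> (\<forall>e\<in>B. \<forall>e'\<in>B. e \<noteq> e' \<longrightarrow> inner e e' = 0) \<and>
     closure (span B) = UNIV"

text \<open>The Hilbert tensor product G (x) H is
  identified with them via  g (x) h  |->  (h' |-> <h,h'> g); under this identification
  the function  x |-> f(x)  of an element f of G (x) H is  x |-> F (phi x).\<close>
definition hilbert_schmidt :: "('h::real_inner \<Rightarrow> 'g::real_inner) \<Rightarrow> bool" where
  "hilbert_schmidt F \<longleftrightarrow> bounded_linear F \<and>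
     (\<exists>B. orthonormal_basis B \<and> (\<lambda>e. (norm (F e))\<^sup>2) summable_on B)"

text \<open>Moore--Penrose pseudo-inverse of a bounded operator T (possibly unbounded,
  defined on  ran T + (ran T)^perp ): the minimal-norm least-squares solution,
  i.e. the unique x in (ker T)^perp with  T x - y  orthogonal to ran T.\<close>
definition mp_dom :: "('a::real_inner \<Rightarrow> 'b::real_inner) \<Rightarrow> 'b set" where
  "mp_dom T = {r + s | r s. r \<in> range T \<and> s \<in> orthogonal_comp (range T)}"

definition mp_inv :: "('a::real_inner \<Rightarrow> 'b::real_inner) \<Rightarrow> 'b \<Rightarrow> 'a" where
  "mp_inv T y = (THE x. x \<in> orthogonal_comp (T -` {0}) \<and> y - T x \<in> orthogonal_comp (range T))"

text \<open>Cross-covariance operator  C_AB = E[(A - mu_A) (x) (B - mu_B)],  (a (x) b) b' = <b,b'> a.\<close>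
definition cross_cov ::
  "'w measure \<Rightarrow> ('w \<Rightarrow> 'a::{real_inner,banach,second_countable_topology})
     \<Rightarrow> ('w \<Rightarrow> 'b::{real_inner,banach,second_countable_topology}) \<Rightarrow> 'b \<Rightarrow> 'a" where
  "cross_cov M A B b =
     (LINT \<omega>|M. inner (B \<omega> - (LINT \<omega>'|M. B \<omega>')) b *\<^sub>R (A \<omega> - (LINT \<omega>'|M. A \<omega>')))"

text \<open>m is (a version of) x |-> E[U | X = x]: measurable and satisfying the defining
  identity E[1_A(X) U] = E[1_A(X) m(X)] for all measurable A.\<close>
definition is_cond_exp_given ::
  "'w measure \<Rightarrow> 'x measure \<Rightarrow> ('w \<Rightarrow> 'x)
     \<Rightarrow> ('w \<Rightarrow> 'g::{real_normed_vector,banach,second_countable_topology}) \<Rightarrow> ('x \<Rightarrow> 'g) \<Rightarrow> bool" where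
  "is_cond_exp_given M Mx X U m \<longleftrightarrow>
     m \<in> borel_measurable Mx \<and>
     (\<forall>A\<in>sets Mx. (LINT \<omega>|M. indicator A (X \<omega>) *\<^sub>R U \<omega>) = (LINT \<omega>|M. indicator A (X \<omega>) *\<^sub>R m (X \<omega>)))"

end

theory Submission
  imports Defs
begin

text \<open>Let \<open>F\<close> be the bounded operator and \<open>c\<close> the constant of hypothesis (B), and put
  \<open>V\<^sub>0 = \<phi>(X) - \<mu>\<^sub>V\<close>. Taking means gives \<open>\<mu>\<^sub>U = F \<mu>\<^sub>V + c\<close>, so \<open>m(X) - \<mu>\<^sub>U = F V\<^sub>0\<close> a.s.
  The defining property of \<open>m\<close> lets one replace \<open>U\<close> by \<open>m(X)\<close> in \<open>C\<^sub>V\<^sub>U\<close>, whence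
  \<open>C\<^sub>V\<^sub>U g = E[\<langle>F V\<^sub>0, g\<rangle> V\<^sub>0] = C\<^sub>V (F\<^sup>* g)\<close>. Thus \<open>C\<^sub>V\<^sub>U\<close> maps into the range of \<open>C\<^sub>V\<close> and
  \<open>C\<^sub>V\<^sup>\<dagger> C\<^sub>V\<^sub>U = P F\<^sup>*\<close>, with \<open>P\<close> the orthogonal projection onto \<open>(ker C\<^sub>V)\<^sup>\<bottom>\<close>; this operator is
  bounded with adjoint \<open>F P\<close>. Finally \<open>V\<^sub>0 \<in> (ker C\<^sub>V)\<^sup>\<bottom>\<close> a.s., since \<open>E[\<langle>V\<^sub>0, d\<rangle>\<^sup>2] = \<langle>C\<^sub>V d, d\<rangle> = 0\<close>
  for \<open>d \<in> ker C\<^sub>V\<close> and a countable dense subset of the kernel suffices. Hence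
  \<open>(C\<^sub>V\<^sup>\<dagger> C\<^sub>V\<^sub>U)\<^sup>* V\<^sub>0 = F P V\<^sub>0 = F V\<^sub>0 = m(X) - \<mu>\<^sub>U\<close> almost surely.\<close>

section \<open>Orthogonal projections and adjoints in Hilbert spaces\<close>

lemma parallelogram_law:
  fixes a b :: "'a::real_inner"
  shows "(norm (a + b))\<^sup>2 + (norm (a - b))\<^sup>2 = 2 * (norm a)\<^sup>2 + 2 * (norm b)\<^sup>2"
  by (simp add: power2_norm_eq_inner inner_add_left inner_add_right inner_diff_left
      inner_diff_right inner_commute)

lemma convex_minimizing_sequence_Cauchy:
  fixes S :: "'a::real_inner set"
  assumes S: "convex S" and s_in: "\<And>n. s n \<in> S"
    and s_near: "\<And>n. (norm (x - s n))\<^sup>2 \<le> (infdist x S)\<^sup>2 + 1 / Suc n"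
  shows "Cauchy s"
proof -
  define d where "d = infdist x S"
  \<comment> \<open>The midpoint of \<open>s m\<close> and \<open>s n\<close> lies in \<open>S\<close>, so the parallelogram law forces \<open>s m\<close> and \<open>s n\<close> together.\<close>
  have s_close: "(norm (s m - s n))\<^sup>2 \<le> 2 / Suc m + 2 / Suc n" for m n
  proof -
    have "(1/2) *\<^sub>R s m + (1/2) *\<^sub>R s n \<in> S" using s_in S by (intro convexD) auto
    then have "d \<le> norm (x - ((1/2) *\<^sub>R s m + (1/2) *\<^sub>R s n))"
      using infdist_le[of _ S x] unfolding d_def by (simp add: dist_norm)
    moreover have "(x - s m) + (x - s n) = 2 *\<^sub>R (x - ((1/2) *\<^sub>R s m + (1/2) *\<^sub>R s n))"
      by (simp add: algebra_simps scaleR_2)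
    ultimately have "2 * d \<le> norm ((x - s m) + (x - s n))" by simp
    then have "(2 * d)\<^sup>2 \<le> (norm ((x - s m) + (x - s n)))\<^sup>2"
      unfolding d_def by (intro power_mono) (auto simp: infdist_nonneg)
    then have "4 * d\<^sup>2 \<le> (norm ((x - s m) + (x - s n)))\<^sup>2"
      by (simp add: power_mult_distrib)
    moreover have "(x - s m) - (x - s n) = s n - s m" by simp
    ultimately show ?thesis
      using parallelogram_law[of "x - s m" "x - s n"] s_near[of m] s_near[of n]
      by (simp add: norm_minus_commute d_def)
  qed
  show "Cauchy s"
  proof (rule metric_CauchyI)
    fix e :: real assume "e > 0"
    obtain N :: nat where N: "4 / e\<^sup>2 < N" using reals_Archimedean2 by blast
    have "dist (s m) (s n) < e" if "m \<ge> N" "n \<ge> N" for m n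
    proof -
      have "2 / real (Suc m) \<le> 2 / Suc N" "2 / real (Suc n) \<le> 2 / Suc N"
        using that by (simp_all add: frac_le)
      then have "(norm (s m - s n))\<^sup>2 \<le> 4 / Suc N" using s_close[of m n] by simp
      also have "\<dots> < e\<^sup>2"
        using N \<open>e > 0\<close> by (simp add: field_simps) (smt (verit) zero_less_power)
      finally show ?thesis using \<open>e > 0\<close> by (simp add: dist_norm power_less_imp_less_base)
    qed
    then show "\<exists>M. \<forall>m\<ge>M. \<forall>n\<ge>M. dist (s m) (s n) < e" by blast
  qed
qed

lemma closed_convex_nearest_point_exists:
  fixes S :: "'a::{real_inner,complete_space} set"
  assumes S: "convex S" "closed S" "S \<noteq> {}"
  shows "\<exists>p\<in>S. \<forall>y\<in>S. norm (x - p) \<le> norm (x - y)"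
proof -
  define d where "d = infdist x S"
  have d_nonneg: "d \<ge> 0" unfolding d_def by (rule infdist_nonneg)
  have d_le: "d \<le> norm (x - y)" if "y \<in> S" for y
    using infdist_le[OF that, of x] unfolding d_def by (simp add: dist_norm)
  have "\<exists>s\<in>S. dist x s < sqrt (d\<^sup>2 + 1 / Suc n)" for n
  proof -
    have "d < sqrt (d\<^sup>2 + 1 / Suc n)" by (rule real_less_rsqrt) simp
    then show ?thesis unfolding d_def infdist_notempty[OF \<open>S \<noteq> {}\<close>]
      by (simp add: cINF_less_iff[OF \<open>S \<noteq> {}\<close>])
  qed
  then obtain s where s_in: "\<And>n. s n \<in> S" and "\<And>n. dist x (s n) < sqrt (d\<^sup>2 + 1 / Suc n)"
    by metis
  have s_near: "(norm (x - s n))\<^sup>2 \<le> d\<^sup>2 + 1 / Suc n" for n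
  proof -
    have "norm (x - s n) \<le> sqrt (d\<^sup>2 + 1 / Suc n)"
      using \<open>dist x (s n) < _\<close> by (simp add: dist_norm)
    then have "(norm (x - s n))\<^sup>2 \<le> (sqrt (d\<^sup>2 + 1 / Suc n))\<^sup>2"
      by (rule power_mono) simp
    then show ?thesis by simp
  qed
  obtain p where lim: "s \<longlonglongrightarrow> p"
    using convex_minimizing_sequence_Cauchy[OF S(1) s_in s_near[unfolded d_def]]
    by (auto simp: Cauchy_convergent_iff convergent_def)
  have "p \<in> S" using closed_sequentially[OF S(2)] s_in lim by blast
  have "(\<lambda>n. (norm (x - s n))\<^sup>2) \<longlonglongrightarrow> (norm (x - p))\<^sup>2"
    by (intro tendsto_intros lim)
  moreover have "(\<lambda>n. d\<^sup>2 + 1 / Suc n) \<longlonglongrightarrow> d\<^sup>2 + 0"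
    by (intro tendsto_intros LIMSEQ_inverse_real_of_nat[unfolded inverse_eq_divide])
  ultimately have "(norm (x - p))\<^sup>2 \<le> d\<^sup>2" using s_near by (intro LIMSEQ_le) auto
  then have "norm (x - p) \<le> d" using d_nonneg by (rule power2_le_imp_le)
  with \<open>p \<in> S\<close> d_le show ?thesis by (meson order_trans)
qed

lemma nearest_point_orthogonal:
  fixes S :: "'a::real_inner set"
  assumes sub: "subspace S" and "p \<in> S" and near: "\<And>y. y \<in> S \<Longrightarrow> norm (x - p) \<le> norm (x - y)"
    and "y \<in> S"
  shows "inner (x - p) y = 0"
proof (cases "y = 0")
  case False
  define a where "a = inner (x - p) y"
  define t where "t = a / (norm y)\<^sup>2"
  have "p + t *\<^sub>R y \<in> S" using assms by (simp add: subspace_add subspace_scale)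
  from near[OF this] have "(norm (x - p))\<^sup>2 \<le> (norm ((x - p) - t *\<^sub>R y))\<^sup>2"
    by (simp add: diff_diff_eq power_mono)
  also have "\<dots> = (norm (x - p))\<^sup>2 - 2 * t * a + t\<^sup>2 * (norm y)\<^sup>2"
    unfolding a_def power2_norm_eq_inner
    by (simp add: inner_diff_left inner_diff_right inner_commute power2_eq_square algebra_simps)
  also have "\<dots> = (norm (x - p))\<^sup>2 - a\<^sup>2 / (norm y)\<^sup>2"
    using False by (simp add: t_def field_simps power2_eq_square)
  finally have "a\<^sup>2 / (norm y)\<^sup>2 \<le> 0" by simp
  then show ?thesis using False unfolding a_def by (simp add: divide_le_0_iff)
qed simp

definition orth_proj :: "'a::{real_inner,complete_space} set \<Rightarrow> 'a \<Rightarrow> 'a" where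
  "orth_proj S x = (SOME p. p \<in> S \<and> (\<forall>y\<in>S. inner (x - p) y = 0))"

context
  fixes S :: "'a::{real_inner,complete_space} set"
  assumes sub: "subspace S" and cl: "closed S"
begin

lemma orth_proj_in: "orth_proj S x \<in> S"
  and orth_proj_orthogonal: "y \<in> S \<Longrightarrow> inner (x - orth_proj S x) y = 0"
proof -
  obtain p where "p \<in> S" "\<And>y. y \<in> S \<Longrightarrow> norm (x - p) \<le> norm (x - y)"
    using closed_convex_nearest_point_exists[OF subspace_imp_convex[OF sub] cl] subspace_0[OF sub]
    by blast
  then have "\<exists>p. p \<in> S \<and> (\<forall>y\<in>S. inner (x - p) y = 0)"
    using nearest_point_orthogonal[OF sub] by blast
  then have "orth_proj S x \<in> S \<and> (\<forall>y\<in>S. inner (x - orth_proj S x) y = 0)"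
    unfolding orth_proj_def by (rule someI_ex)
  then show "orth_proj S x \<in> S" "y \<in> S \<Longrightarrow> inner (x - orth_proj S x) y = 0" by auto
qed

lemma orth_proj_unique:
  assumes "p \<in> S" "\<And>y. y \<in> S \<Longrightarrow> inner (x - p) y = 0"
  shows "orth_proj S x = p"
proof -
  let ?q = "orth_proj S x"
  have "?q - p \<in> S" using orth_proj_in assms(1) sub by (simp add: subspace_diff)
  then have "inner (x - p) (?q - p) - inner (x - ?q) (?q - p) = 0"
    using assms(2) orth_proj_orthogonal by simp
  then have "inner (?q - p) (?q - p) = 0" by (simp add: inner_diff_left)
  then show ?thesis by simp
qed

lemma orth_proj_orthogonal_comp: "x \<in> orthogonal_comp S \<Longrightarrow> orth_proj S x = 0"
  by (rule orth_proj_unique)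
     (auto simp: subspace_0[OF sub] orthogonal_comp_def orthogonal_def inner_commute)

lemma orth_proj_self_adjoint: "inner (orth_proj S x) y = inner x (orth_proj S y)"
proof -
  have "inner (y - orth_proj S y) (orth_proj S x) = 0" "inner (x - orth_proj S x) (orth_proj S y) = 0"
    by (simp_all add: orth_proj_orthogonal orth_proj_in)
  then show ?thesis by (simp add: inner_diff_left inner_diff_right inner_commute)
qed

lemma bounded_linear_orth_proj: "bounded_linear (orth_proj S)"
proof (rule bounded_linear_intro)
  fix x y
  show "orth_proj S (x + y) = orth_proj S x + orth_proj S y"
  proof (rule orth_proj_unique)
    show "orth_proj S x + orth_proj S y \<in> S" by (simp add: orth_proj_in sub subspace_add)
    fix z assume "z \<in> S"
    have "x + y - (orth_proj S x + orth_proj S y) = (x - orth_proj S x) + (y - orth_proj S y)"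
      by simp
    then show "inner (x + y - (orth_proj S x + orth_proj S y)) z = 0"
      using orth_proj_orthogonal[OF \<open>z \<in> S\<close>] by (simp only: inner_add_left)
  qed
next
  fix r x
  show "orth_proj S (r *\<^sub>R x) = r *\<^sub>R orth_proj S x"
  proof (rule orth_proj_unique)
    show "r *\<^sub>R orth_proj S x \<in> S" by (simp add: orth_proj_in sub subspace_scale)
    fix z assume "z \<in> S"
    have "inner (r *\<^sub>R x - r *\<^sub>R orth_proj S x) z = r * inner (x - orth_proj S x) z"
      by (simp add: inner_diff_left right_diff_distrib)
    also have "\<dots> = 0" using orth_proj_orthogonal[OF \<open>z \<in> S\<close>] by simp
    finally show "inner (r *\<^sub>R x - r *\<^sub>R orth_proj S x) z = 0" .
  qed
next
  fix x
  have "orthogonal (orth_proj S x) (x - orth_proj S x)"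
    using orth_proj_orthogonal[OF orth_proj_in] by (simp add: orthogonal_def inner_commute)
  from norm_add_Pythagorean[OF this]
  have "(norm (orth_proj S x))\<^sup>2 \<le> (norm x)\<^sup>2" by simp
  then show "norm (orth_proj S x) \<le> norm x * 1" using power2_le_imp_le by simp
qed

end

lemma bounded_linear_kernel:
  assumes "bounded_linear f"
  shows "subspace (f -` {0})" "closed (f -` {0})"
proof -
  interpret bounded_linear f by fact
  show "subspace (f -` {0})" unfolding subspace_def by (simp add: add scale)
  show "closed (f -` {0})"
    by (intro closed_vimage closed_singleton linear_continuous_on assms)
qed

lemma riesz_representation:
  fixes f :: "'a::{real_inner,complete_space} \<Rightarrow> real"
  assumes "bounded_linear f"
  shows "\<exists>z. \<forall>x. f x = inner z x"
proof (cases "\<forall>x. f x = 0")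
  case True
  then show ?thesis by (intro exI[of _ 0]) simp
next
  case False
  then obtain x0 where "f x0 \<noteq> 0" by auto
  interpret f: bounded_linear f by fact
  note ker = bounded_linear_kernel[OF assms]
  \<comment> \<open>The representing vector is the multiple of \<open>w \<perp> ker f\<close> that has the right value at \<open>w\<close>.\<close>
  define w where "w = x0 - orth_proj (f -` {0}) x0"
  have fw: "f w = f x0" using orth_proj_in[OF ker, of x0] by (simp add: w_def f.diff)
  then have "inner w w \<noteq> 0" using \<open>f x0 \<noteq> 0\<close> by auto
  have "f x = inner ((f w / inner w w) *\<^sub>R w) x" for x
  proof -
    have "x - (f x / f w) *\<^sub>R w \<in> f -` {0}" using fw \<open>f x0 \<noteq> 0\<close> by (simp add: f.diff f.scale)
    from orth_proj_orthogonal[OF ker this, of x0]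
    have "inner w x = (f x / f w) * inner w w" by (simp add: w_def inner_diff_right inner_commute)
    then show ?thesis using \<open>inner w w \<noteq> 0\<close> fw \<open>f x0 \<noteq> 0\<close> by (simp add: field_simps)
  qed
  then show ?thesis by blast
qed

lemma adjoint_inner:
  fixes F :: "'a::{real_inner,complete_space} \<Rightarrow> 'b::real_inner"
  assumes "bounded_linear F"
  shows "inner (F x) y = inner x (adjoint F y)"
proof -
  have "\<exists>z. \<forall>x. inner (F x) y = inner z x" for y
    by (rule riesz_representation[OF bounded_linear_compose[OF bounded_linear_inner_left assms]])
  then obtain G where "\<forall>y x. inner (F x) y = inner (G y) x" by metis
  then have "\<exists>G. \<forall>x y. inner (F x) y = inner x (G y)" by (metis inner_commute)
  then have "\<forall>x y. inner (F x) y = inner x (adjoint F y)" unfolding adjoint_def by (rule someI_ex)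
  then show ?thesis by blast
qed

lemma bounded_linear_adjoint:
  fixes F :: "'a::{real_inner,complete_space} \<Rightarrow> 'b::real_inner"
  assumes "bounded_linear F"
  shows "bounded_linear (adjoint F)"
proof -
  note adj = adjoint_inner[OF assms]
  obtain K where "K > 0" "\<And>x. norm (F x) \<le> norm x * K"
    using bounded_linear.pos_bounded[OF assms] by blast
  show ?thesis
  proof (rule bounded_linear_intro)
    show "adjoint F (x + y) = adjoint F x + adjoint F y" for x y
      by (rule vector_eq_ldot[THEN iffD1]) (simp add: inner_add_right flip: adj)
    show "adjoint F (r *\<^sub>R x) = r *\<^sub>R adjoint F x" for r x
      by (rule vector_eq_ldot[THEN iffD1]) (simp flip: adj)
    fix y
    let ?z = "adjoint F y"
    have "norm ?z * norm ?z = inner (F ?z) y" by (simp add: adj flip: power2_norm_eq_inner power2_eq_square)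
    also have "\<dots> \<le> norm ?z * (norm y * K)"
      using norm_cauchy_schwarz[of "F ?z" y] \<open>\<And>x. norm (F x) \<le> norm x * K\<close>[of ?z]
      by (smt (verit) mult.commute mult.left_commute mult_right_mono norm_ge_zero)
    finally show "norm ?z \<le> norm y * K"
      using \<open>K > 0\<close> by (cases "norm ?z = 0") (auto simp: mult_le_cancel_left_pos)
  qed
qed

section \<open>The Moore--Penrose inverse on the range\<close>

lemma mp_dom_range:
  fixes T :: "'a::real_inner \<Rightarrow> 'b::real_inner"
  shows "range T \<subseteq> mp_dom T"
proof
  fix y assume "y \<in> range T"
  moreover have "(0::'b) \<in> orthogonal_comp (range T)" by (simp add: orthogonal_comp_def orthogonal_def)
  ultimately show "y \<in> mp_dom T" unfolding mp_dom_def by force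
qed

lemma mp_inv_apply:
  fixes C :: "'a::{real_inner,complete_space} \<Rightarrow> 'b::real_inner"
  assumes C: "bounded_linear C"
  shows "mp_inv C (C h) = h - orth_proj (C -` {0}) h"
proof -
  interpret C: bounded_linear C by (rule C)
  define K where "K = C -` {0}"
  note ker = bounded_linear_kernel[OF C, folded K_def]
  have perp: "h - orth_proj K h \<in> orthogonal_comp K"
    using orth_proj_orthogonal[OF ker] by (auto simp: orthogonal_comp_def orthogonal_def inner_commute)
  have "C h - C (h - orth_proj K h) = 0" using orth_proj_in[OF ker] by (simp add: K_def C.diff)
  then have residual: "C h - C (h - orth_proj K h) \<in> orthogonal_comp (range C)"
    by (simp add: orthogonal_comp_def orthogonal_def)
  have unique: "x = h - orth_proj K h"
    if x: "x \<in> orthogonal_comp K" and res: "C h - C x \<in> orthogonal_comp (range C)" for x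
  proof -
    have "inner (C (h - x)) (C h - C x) = 0"
      using res unfolding orthogonal_comp_def orthogonal_def by blast
    then have "h - x \<in> K" by (simp add: K_def C.diff)
    then have "orth_proj K h - (h - x) \<in> K" by (rule subspace_diff[OF ker(1) orth_proj_in[OF ker]])
    moreover have "orth_proj K h - (h - x) = x - (h - orth_proj K h)" by simp
    ultimately have "x - (h - orth_proj K h) \<in> K" by simp
    moreover have "x - (h - orth_proj K h) \<in> orthogonal_comp K"
      by (rule subspace_diff[OF subspace_orthogonal_comp x perp])
    ultimately have "inner (x - (h - orth_proj K h)) (x - (h - orth_proj K h)) = 0"
      unfolding orthogonal_comp_def orthogonal_def by blast
    then show ?thesis by simp
  qed
  show ?thesis unfolding mp_inv_def K_def[symmetric]
    by (rule the_equality) (use perp residual unique in blast)+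
qed

lemma mp_inv_comp_adjoint:
  fixes C :: "'a::{real_inner,complete_space} \<Rightarrow> 'b::real_inner"
    and F :: "'a \<Rightarrow> 'c::{real_inner,complete_space}"
  assumes C: "bounded_linear C" and F: "bounded_linear F"
  defines "T \<equiv> \<lambda>g. mp_inv C (C (adjoint F g))"
  shows "bounded_linear T"
    and "adjoint T = (\<lambda>v. F (v - orth_proj (C -` {0}) v))"
proof -
  note ker = bounded_linear_kernel[OF C]
  have T: "T = (\<lambda>g. adjoint F g - orth_proj (C -` {0}) (adjoint F g))"
    unfolding T_def by (simp add: mp_inv_apply[OF C])
  show "bounded_linear T" unfolding T
    by (intro bounded_linear_sub bounded_linear_adjoint[OF F]
        bounded_linear_compose[OF bounded_linear_orth_proj[OF ker] bounded_linear_adjoint[OF F]])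
  show "adjoint T = (\<lambda>v. F (v - orth_proj (C -` {0}) v))"
  proof (rule adjoint_unique, intro allI)
    fix g v
    have "inner (T g) v = inner (adjoint F g) (v - orth_proj (C -` {0}) v)"
      unfolding T by (simp add: inner_diff_left inner_diff_right orth_proj_self_adjoint[OF ker])
    also have "\<dots> = inner g (F (v - orth_proj (C -` {0}) v))"
      by (simp only: inner_commute[of "adjoint F g"] inner_commute[of g] adjoint_inner[OF F])
    finally show "inner (T g) v = inner g (F (v - orth_proj (C -` {0}) v))" .
  qed
qed

lemma inner_feature_measurable:
  fixes \<phi> :: "'x \<Rightarrow> 'h::{real_inner,complete_space}"
  assumes k_meas: "(\<lambda>(x, x'). inner (\<phi> x) (\<phi> x')) \<in> borel_measurable (Mx \<Otimes>\<^sub>M Mx)"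
  shows "(\<lambda>x. inner (\<phi> x) h) \<in> borel_measurable Mx"
proof -
  define W where "W = {h. (\<lambda>x. inner (\<phi> x) h) \<in> borel_measurable Mx}"
  have sub: "subspace W" unfolding W_def subspace_def by (auto simp: inner_add_right)
  have cl: "closed W" unfolding closed_sequential_limits
  proof safe
    fix s l assume s: "\<forall>n. s n \<in> W" and l: "s \<longlonglongrightarrow> l"
    have "(\<lambda>x. inner (\<phi> x) l) \<in> borel_measurable Mx"
    proof (rule borel_measurable_LIMSEQ_real)
      show "(\<lambda>i. inner (\<phi> x) (s i)) \<longlonglongrightarrow> inner (\<phi> x) l" for x
        using l by (intro tendsto_intros)
      show "(\<lambda>x. inner (\<phi> x) (s i)) \<in> borel_measurable Mx" for i
        using s by (simp add: W_def)
    qed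
    then show "l \<in> W" by (simp add: W_def)
  qed
  have \<phi>_in: "\<phi> x0 \<in> W" if "x0 \<in> space Mx" for x0
  proof -
    have "(\<lambda>x. (\<lambda>(x, x'). inner (\<phi> x) (\<phi> x')) (x, x0)) \<in> borel_measurable Mx"
      by (rule measurable_compose[OF _ k_meas]) (use that in measurable)
    then show ?thesis by (simp add: W_def)
  qed
  \<comment> \<open>\<open>h\<close> and its projection onto \<open>W\<close> have the same inner products with every \<open>\<phi> x\<close>.\<close>
  have "inner (\<phi> x) h = inner (\<phi> x) (orth_proj W h)" if "x \<in> space Mx" for x
    using orth_proj_orthogonal[OF sub cl \<phi>_in[OF that], of h]
    by (simp add: inner_diff_left inner_commute[of "\<phi> x"])
  moreover have "orth_proj W h \<in> W" by (rule orth_proj_in[OF sub cl])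
  ultimately show ?thesis unfolding W_def by (simp cong: measurable_cong)
qed

section \<open>Square-integrable random vectors and covariance operators\<close>

lemma norm_inner_scaleR_le:
  fixes x :: "'a::real_inner" and y :: "'b::real_normed_vector"
  shows "norm (inner x g *\<^sub>R y) \<le> norm g * ((norm x)\<^sup>2 + (norm y)\<^sup>2)"
proof -
  have "norm (inner x g *\<^sub>R y) \<le> norm x * norm g * norm y"
    using Cauchy_Schwarz_ineq2[of x g] by (simp add: mult_right_mono)
  also have "\<dots> \<le> norm g * ((norm x)\<^sup>2 + (norm y)\<^sup>2)"
  proof -
    have "norm x * norm y \<le> (norm x)\<^sup>2 + (norm y)\<^sup>2"
      using sum_squares_bound[of "norm x" "norm y"] mult_nonneg_nonneg[OF norm_ge_zero norm_ge_zero, of x y] by linarith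
    then show ?thesis by (simp add: mult.commute mult.left_commute mult_left_mono)
  qed
  finally show ?thesis .
qed

lemma integrable_inner_scaleR:
  fixes f :: "'a \<Rightarrow> 'b::{real_inner,banach,second_countable_topology}"
    and h :: "'a \<Rightarrow> 'c::{banach,second_countable_topology}"
  assumes [measurable]: "f \<in> borel_measurable M" "h \<in> borel_measurable M"
    and "integrable M (\<lambda>x. (norm (f x))\<^sup>2)" "integrable M (\<lambda>x. (norm (h x))\<^sup>2)"
  shows "integrable M (\<lambda>x. inner (f x) g *\<^sub>R h x)"
proof (rule Bochner_Integration.integrable_bound
    [where f="\<lambda>x. norm g * ((norm (f x))\<^sup>2 + (norm (h x))\<^sup>2)"])
  show "AE x in M. norm (inner (f x) g *\<^sub>R h x) \<le> norm (norm g * ((norm (f x))\<^sup>2 + (norm (h x))\<^sup>2))"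
    using norm_inner_scaleR_le[of "f x" g "h x" for x] by (intro AE_I2) (simp add: order_trans)
qed (use assms in auto)

lemma integrable_inner_mult:
  fixes f :: "'a \<Rightarrow> 'b::{real_inner,banach,second_countable_topology}"
    and h :: "'a \<Rightarrow> 'c::{real_inner,banach,second_countable_topology}"
  assumes "f \<in> borel_measurable M" "h \<in> borel_measurable M"
    and "integrable M (\<lambda>x. (norm (f x))\<^sup>2)" "integrable M (\<lambda>x. (norm (h x))\<^sup>2)"
  shows "integrable M (\<lambda>x. inner (f x) g * inner (h x) k)"
  using integrable_inner_left[OF integrable_inner_scaleR[OF assms], of g k] by simp

context finite_measure
begin

lemma integrable_of_square_integrable:
  fixes f :: "'a \<Rightarrow> 'b::{banach,second_countable_topology}"
  assumes [measurable]: "f \<in> borel_measurable M" and "integrable M (\<lambda>x. (norm (f x))\<^sup>2)"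
  shows "integrable M f"
proof (rule Bochner_Integration.integrable_bound[where f="\<lambda>x. 1 + (norm (f x))\<^sup>2"])
  show "AE x in M. norm (f x) \<le> norm (1 + (norm (f x))\<^sup>2)"
  proof (rule AE_I2)
    fix x
    show "norm (f x) \<le> norm (1 + (norm (f x))\<^sup>2)"
    proof -
      have "norm (f x) \<le> 1 + (norm (f x))\<^sup>2"
        using sum_squares_bound[of "norm (f x)" 1] norm_ge_zero[of "f x"]
        unfolding power_one mult_1_right by linarith
      then show ?thesis by simp
    qed
  qed
qed (use assms in auto)

lemma square_integrable_diff_const:
  fixes f :: "'a \<Rightarrow> 'b::{banach,second_countable_topology}"
  assumes [measurable]: "f \<in> borel_measurable M" and "integrable M (\<lambda>x. (norm (f x))\<^sup>2)"
  shows "integrable M (\<lambda>x. (norm (f x - c))\<^sup>2)"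
proof (rule Bochner_Integration.integrable_bound[where f="\<lambda>x. 2 * (norm (f x))\<^sup>2 + 2 * (norm c)\<^sup>2"])
  have "(norm (f x - c))\<^sup>2 \<le> 2 * (norm (f x))\<^sup>2 + 2 * (norm c)\<^sup>2" for x
  proof -
    have "(norm (f x - c))\<^sup>2 \<le> (norm (f x) + norm c)\<^sup>2"
      using norm_triangle_ineq4[of "f x" c] by (intro power_mono) auto
    then show ?thesis
      using sum_squares_bound[of "norm (f x)" "norm c"] by (simp add: power2_sum)
  qed
  then show "AE x in M. norm ((norm (f x - c))\<^sup>2) \<le> norm (2 * (norm (f x))\<^sup>2 + 2 * (norm c)\<^sup>2)"
    by simp
qed (use assms in auto)

end

context prob_space
begin

lemma integral_affine_AE:
  fixes F :: "'b::{banach,second_countable_topology} \<Rightarrow> 'c::{banach,second_countable_topology}"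
  assumes F: "bounded_linear F" and A: "integrable M A"
    and B: "B \<in> borel_measurable M" and AE: "AE \<omega> in M. B \<omega> = F (A \<omega>) + c"
  shows "expectation B = F (expectation A) + c"
proof -
  have "expectation B = expectation (\<lambda>\<omega>. F (A \<omega>) + c)"
  proof (rule integral_cong_AE[OF B _ AE])
    show "(\<lambda>\<omega>. F (A \<omega>) + c) \<in> borel_measurable M"
      using integrable_bounded_linear[OF F A] by (intro borel_measurable_add) auto
  qed
  also have "\<dots> = F (expectation A) + c"
    using integrable_bounded_linear[OF F A] integral_bounded_linear[OF F A] by (simp add: prob_space)
  finally show ?thesis .
qed

context
  fixes A :: "'a \<Rightarrow> 'h::{real_inner,banach,second_countable_topology}"
    and B :: "'a \<Rightarrow> 'g::{real_inner,banach,second_countable_topology}"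
  assumes A[measurable]: "A \<in> borel_measurable M" and A2: "integrable M (\<lambda>\<omega>. (norm (A \<omega>))\<^sup>2)"
    and B[measurable]: "B \<in> borel_measurable M" and B2: "integrable M (\<lambda>\<omega>. (norm (B \<omega>))\<^sup>2)"
begin

lemma integrable_cross_cov_integrand:
  "integrable M (\<lambda>\<omega>. inner (B \<omega> - expectation B) b *\<^sub>R (A \<omega> - expectation A))"
  using A2 B2 by (intro integrable_inner_scaleR square_integrable_diff_const) auto

lemma cross_cov_inner:
  "inner (cross_cov M A B b) a
     = (LINT \<omega>|M. inner (B \<omega> - expectation B) b * inner (A \<omega> - expectation A) a)"
  unfolding cross_cov_def
  by (simp add: integral_inner_left[OF integrable_cross_cov_integrand, symmetric])

lemma cross_cov_inner_uncentered:
  "inner (cross_cov M A B b) a = (LINT \<omega>|M. inner (B \<omega>) b * inner (A \<omega> - expectation A) a)"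
proof -
  have A_int: "integrable M A" by (rule integrable_of_square_integrable[OF A A2])
  have prod: "integrable M (\<lambda>\<omega>. inner (B \<omega>) b * inner (A \<omega> - expectation A) a)"
    using A2 B2 by (intro integrable_inner_mult square_integrable_diff_const) auto
  have centered: "(LINT \<omega>|M. inner (A \<omega> - expectation A) a) = 0"
    using A_int by (simp add: integral_inner_left[symmetric] prob_space)
  have "inner (cross_cov M A B b) a
      = (LINT \<omega>|M. inner (B \<omega>) b * inner (A \<omega> - expectation A) a
                     - inner (expectation B) b * inner (A \<omega> - expectation A) a)"
    unfolding cross_cov_inner by (simp add: inner_diff_left left_diff_distrib)
  also have "\<dots> = (LINT \<omega>|M. inner (B \<omega>) b * inner (A \<omega> - expectation A) a)"
    using prod A_int centered by simp
  finally show ?thesis .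
qed

lemma bounded_linear_cross_cov: "bounded_linear (cross_cov M A B)"
proof (rule bounded_linear_intro)
  let ?A0 = "\<lambda>\<omega>. A \<omega> - expectation A" and ?B0 = "\<lambda>\<omega>. B \<omega> - expectation B"
  note int = integrable_cross_cov_integrand
  show "cross_cov M A B (x + y) = cross_cov M A B x + cross_cov M A B y" for x y
    unfolding cross_cov_def
    by (simp add: inner_add_right scaleR_add_left Bochner_Integration.integral_add[OF int int])
  show "cross_cov M A B (r *\<^sub>R x) = r *\<^sub>R cross_cov M A B x" for r x
    unfolding cross_cov_def by (simp flip: scaleR_scaleR)
  fix x
  have "norm (cross_cov M A B x) \<le> (LINT \<omega>|M. norm x * ((norm (?B0 \<omega>))\<^sup>2 + (norm (?A0 \<omega>))\<^sup>2))"
    unfolding cross_cov_def using integral_norm_bound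
  proof (rule order_trans)
    show "(LINT \<omega>|M. norm (inner (?B0 \<omega>) x *\<^sub>R ?A0 \<omega>))
        \<le> (LINT \<omega>|M. norm x * ((norm (?B0 \<omega>))\<^sup>2 + (norm (?A0 \<omega>))\<^sup>2))"
      using A2 B2
      by (intro integral_mono[OF integrable_norm[OF int] _ norm_inner_scaleR_le] integrable_mult_right
          Bochner_Integration.integrable_add square_integrable_diff_const) auto
  qed
  also have "\<dots> = norm x * (LINT \<omega>|M. (norm (?B0 \<omega>))\<^sup>2 + (norm (?A0 \<omega>))\<^sup>2)" by simp
  finally show "norm (cross_cov M A B x) \<le> norm x * (LINT \<omega>|M. (norm (?B0 \<omega>))\<^sup>2 + (norm (?A0 \<omega>))\<^sup>2)" .
qed

end

lemma cross_cov_kernel_AE_orthogonal: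
  fixes A :: "'a \<Rightarrow> 'h::{real_inner,banach,second_countable_topology}"
  assumes A[measurable]: "A \<in> borel_measurable M" and A2: "integrable M (\<lambda>\<omega>. (norm (A \<omega>))\<^sup>2)"
  shows "AE \<omega> in M. A \<omega> - expectation A \<in> orthogonal_comp (cross_cov M A A -` {0})"
proof -
  define K where "K = cross_cov M A A -` {0}"
  have null: "AE \<omega> in M. inner (A \<omega> - expectation A) d = 0" if "d \<in> K" for d
  proof -
    have int: "integrable M (\<lambda>\<omega>. inner (A \<omega> - expectation A) d * inner (A \<omega> - expectation A) d)"
      using A2 by (intro integrable_inner_mult square_integrable_diff_const) auto
    have "(LINT \<omega>|M. inner (A \<omega> - expectation A) d * inner (A \<omega> - expectation A) d) = 0"
      using that cross_cov_inner[OF A A2 A A2, of d d] by (simp add: K_def)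
    then have "AE \<omega> in M. inner (A \<omega> - expectation A) d * inner (A \<omega> - expectation A) d = 0"
      using integral_nonneg_eq_0_iff_AE[OF int] by simp
    then show ?thesis by simp
  qed
  \<comment> \<open>A countable dense subset of \<open>K\<close> reduces the uncountably many null sets to one.\<close>
  obtain D where D: "countable D" "D \<subseteq> K" "K \<subseteq> closure D" using separable[of K] by blast
  have "AE \<omega> in M. \<forall>d\<in>D. inner (A \<omega> - expectation A) d = 0"
    using D null by (intro AE_ball_countable') auto
  then show ?thesis
  proof eventually_elim
    case (elim \<omega>)
    have "closed {d. inner (A \<omega> - expectation A) d = 0}"
      by (intro closed_Collect_eq continuous_intros)
    then have "closure D \<subseteq> {d. inner (A \<omega> - expectation A) d = 0}"
      using elim by (intro closure_minimal) auto
    then show ?case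
      using D(3) by (auto simp: K_def orthogonal_comp_def orthogonal_def inner_commute)
  qed
qed

lemma cross_cov_affine:
  fixes A :: "'a \<Rightarrow> 'h::{real_inner,banach,second_countable_topology}"
    and B :: "'a \<Rightarrow> 'g::{real_inner,banach,second_countable_topology}"
  assumes A[measurable]: "A \<in> borel_measurable M" and A2: "integrable M (\<lambda>\<omega>. (norm (A \<omega>))\<^sup>2)"
    and B[measurable]: "B \<in> borel_measurable M" and B2: "integrable M (\<lambda>\<omega>. (norm (B \<omega>))\<^sup>2)"
    and F: "bounded_linear F" and AE: "AE \<omega> in M. B \<omega> = F (A \<omega>) + c"
  shows "cross_cov M A B g = cross_cov M A A (adjoint F g)"
proof (rule vector_eq_rdot[THEN iffD1], intro allI)
  fix k
  have mean: "expectation B = F (expectation A) + c"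
    by (rule integral_affine_AE[OF F integrable_of_square_integrable[OF A A2] B AE])
  from AE have "AE \<omega> in M. B \<omega> - expectation B = F (A \<omega> - expectation A)"
    unfolding mean by eventually_elim (simp add: linear_diff[OF bounded_linear.linear[OF F]])
  then have "AE \<omega> in M. inner (B \<omega> - expectation B) g * inner (A \<omega> - expectation A) k
      = inner (A \<omega> - expectation A) (adjoint F g) * inner (A \<omega> - expectation A) k"
    by eventually_elim (simp add: adjoint_inner[OF F])
  then have "(LINT \<omega>|M. inner (B \<omega> - expectation B) g * inner (A \<omega> - expectation A) k)
      = (LINT \<omega>|M. inner (A \<omega> - expectation A) (adjoint F g) * inner (A \<omega> - expectation A) k)"
    by (rule integral_cong_AE[rotated 2]) auto
  then show "inner (cross_cov M A B g) k = inner (cross_cov M A A (adjoint F g)) k"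
    by (simp add: cross_cov_inner[OF A A2 B B2] cross_cov_inner[OF A A2 A A2])
qed

subsection \<open>Conditioning on \<open>X\<close>\<close>

lemma finite_measure_subalgebra_vimage:
  assumes "X \<in> measurable M Mx"
  shows "finite_measure_subalgebra M (vimage_algebra (space M) X Mx)"
proof -
  have "X \<in> space M \<rightarrow> space Mx" using measurable_space[OF assms] by auto
  then have "sets (vimage_algebra (space M) X Mx) \<subseteq> sets M"
    using measurable_sets[OF assms] by (auto simp: sets_vimage_algebra2)
  then show ?thesis
    by unfold_locales (simp add: subalgebra_def)
qed

lemma integral_cond_exp_given:
  assumes X: "X \<in> measurable M Mx" and m: "is_cond_exp_given M Mx X U m"
  shows "expectation U = expectation (\<lambda>\<omega>. m (X \<omega>))"
proof -
  have ind: "indicator (space Mx) (X \<omega>) = (1::real)" if "\<omega> \<in> space M" for \<omega>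
    using measurable_space[OF X that] by simp
  have "(LINT \<omega>|M. indicator (space Mx) (X \<omega>) *\<^sub>R U \<omega>)
      = (LINT \<omega>|M. indicator (space Mx) (X \<omega>) *\<^sub>R m (X \<omega>))"
    using m by (simp add: is_cond_exp_given_def)
  then show ?thesis by (simp add: ind cong: Bochner_Integration.integral_cong)
qed

lemma real_cond_exp_given:
  fixes U :: "'a \<Rightarrow> 'g::{real_inner,banach,second_countable_topology}"
  assumes X[measurable]: "X \<in> measurable M Mx" and m: "is_cond_exp_given M Mx X U m"
    and U: "integrable M U" and mX: "integrable M (\<lambda>\<omega>. m (X \<omega>))"
  shows "AE \<omega> in M. real_cond_exp M (vimage_algebra (space M) X Mx) (\<lambda>\<omega>. inner (U \<omega>) g) \<omega>
                    = inner (m (X \<omega>)) g"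
proof -
  let ?F = "vimage_algebra (space M) X Mx"
  interpret F: finite_measure_subalgebra M ?F by (rule finite_measure_subalgebra_vimage[OF X])
  have [measurable]: "m \<in> borel_measurable Mx" using m by (simp add: is_cond_exp_given_def)
  have [measurable]: "X \<in> measurable ?F Mx"
    using measurable_space[OF X] by (intro measurable_vimage_algebra1) auto
  show ?thesis
  proof (rule F.real_cond_exp_charact)
    fix A assume "A \<in> sets ?F"
    then obtain B where B[measurable]: "B \<in> sets Mx" and A: "A = X -` B \<inter> space M"
      using measurable_space[OF X] by (auto simp: sets_vimage_algebra2)
    have ind: "indicator A \<omega> = indicator B (X \<omega>)" if "\<omega> \<in> space M" for \<omega> :: 'a
      using that by (simp add: A indicator_def)
    have integrable_restrict: "integrable M (\<lambda>\<omega>. indicator B (X \<omega>) *\<^sub>R f \<omega>)"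
      if "integrable M f" for f :: "'a \<Rightarrow> 'g"
    proof (rule Bochner_Integration.integrable_bound[OF that])
      show "(\<lambda>\<omega>. indicator B (X \<omega>) *\<^sub>R f \<omega>) \<in> borel_measurable M"
        using borel_measurable_integrable[OF that] by measurable
    qed (auto simp: indicator_def)
    have "(\<integral>\<omega>\<in>A. inner (U \<omega>) g \<partial>M) = inner (LINT \<omega>|M. indicator B (X \<omega>) *\<^sub>R U \<omega>) g"
      unfolding set_lebesgue_integral_def integral_inner_left[OF integrable_restrict[OF U], symmetric]
      by (rule Bochner_Integration.integral_cong) (simp_all add: ind)
    also have "\<dots> = inner (LINT \<omega>|M. indicator B (X \<omega>) *\<^sub>R m (X \<omega>)) g"
      using m B by (simp add: is_cond_exp_given_def)
    also have "\<dots> = (\<integral>\<omega>\<in>A. inner (m (X \<omega>)) g \<partial>M)"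
      unfolding set_lebesgue_integral_def integral_inner_left[OF integrable_restrict[OF mX], symmetric]
      by (rule Bochner_Integration.integral_cong) (simp_all add: ind)
    finally show "(\<integral>\<omega>\<in>A. inner (U \<omega>) g \<partial>M) = (\<integral>\<omega>\<in>A. inner (m (X \<omega>)) g \<partial>M)" .
  qed (use U mX in auto)
qed

lemma integral_mult_cond_exp_given:
  fixes U :: "'a \<Rightarrow> 'g::{real_inner,banach,second_countable_topology}"
  assumes X[measurable]: "X \<in> measurable M Mx" and m: "is_cond_exp_given M Mx X U m"
    and U: "integrable M U" and mX: "integrable M (\<lambda>\<omega>. m (X \<omega>))"
    and f[measurable]: "f \<in> borel_measurable Mx"
    and fU: "integrable M (\<lambda>\<omega>. f (X \<omega>) * inner (U \<omega>) g)"
  shows "(LINT \<omega>|M. f (X \<omega>) * inner (U \<omega>) g) = (LINT \<omega>|M. f (X \<omega>) * inner (m (X \<omega>)) g)"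
proof -
  let ?F = "vimage_algebra (space M) X Mx"
  interpret F: finite_measure_subalgebra M ?F by (rule finite_measure_subalgebra_vimage[OF X])
  have [measurable]: "m \<in> borel_measurable Mx" using m by (simp add: is_cond_exp_given_def)
  have [measurable]: "X \<in> measurable ?F Mx"
    using measurable_space[OF X] by (intro measurable_vimage_algebra1) auto
  have "(LINT \<omega>|M. f (X \<omega>) * inner (U \<omega>) g)
      = (LINT \<omega>|M. f (X \<omega>) * real_cond_exp M ?F (\<lambda>\<omega>. inner (U \<omega>) g) \<omega>)"
    using U fU by (intro F.real_cond_exp_intg(2)[symmetric]) auto
  also have "\<dots> = (LINT \<omega>|M. f (X \<omega>) * inner (m (X \<omega>)) g)"
    using real_cond_exp_given[OF X m U mX, of g] by (intro integral_cong_AE) auto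
  finally show ?thesis .
qed

lemma cross_cov_cond_exp_given:
  fixes \<phi> :: "'x \<Rightarrow> 'h::{real_inner,banach,second_countable_topology}"
    and U :: "'a \<Rightarrow> 'g::{real_inner,banach,second_countable_topology}"
  assumes X[measurable]: "X \<in> measurable M Mx" and m: "is_cond_exp_given M Mx X U m"
    and \<phi>: "\<And>h. (\<lambda>x. inner (\<phi> x) h) \<in> borel_measurable Mx"
    and V[measurable]: "(\<lambda>\<omega>. \<phi> (X \<omega>)) \<in> borel_measurable M"
    and V2: "integrable M (\<lambda>\<omega>. (norm (\<phi> (X \<omega>)))\<^sup>2)"
    and U[measurable]: "U \<in> borel_measurable M" and U2: "integrable M (\<lambda>\<omega>. (norm (U \<omega>))\<^sup>2)"
    and mX2: "integrable M (\<lambda>\<omega>. (norm (m (X \<omega>)))\<^sup>2)"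
  shows "cross_cov M (\<lambda>\<omega>. \<phi> (X \<omega>)) U = cross_cov M (\<lambda>\<omega>. \<phi> (X \<omega>)) (\<lambda>\<omega>. m (X \<omega>))"
proof (rule ext, rule vector_eq_rdot[THEN iffD1], intro allI)
  fix g k
  let ?\<mu> = "expectation (\<lambda>\<omega>. \<phi> (X \<omega>))"
  have [measurable]: "m \<in> borel_measurable Mx" using m by (simp add: is_cond_exp_given_def)
  have mX: "(\<lambda>\<omega>. m (X \<omega>)) \<in> borel_measurable M" by measurable
  have f: "(\<lambda>x. inner (\<phi> x - ?\<mu>) k) \<in> borel_measurable Mx"
    using \<phi>[of k] by (simp add: inner_diff_left)
  have fU: "integrable M (\<lambda>\<omega>. inner (\<phi> (X \<omega>) - ?\<mu>) k * inner (U \<omega>) g)"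
    using V2 U2 by (intro integrable_inner_mult square_integrable_diff_const) auto
  have "inner (cross_cov M (\<lambda>\<omega>. \<phi> (X \<omega>)) U g) k
      = (LINT \<omega>|M. inner (\<phi> (X \<omega>) - ?\<mu>) k * inner (U \<omega>) g)"
    by (simp add: cross_cov_inner_uncentered[OF V V2 U U2] mult.commute)
  also have "\<dots> = (LINT \<omega>|M. inner (\<phi> (X \<omega>) - ?\<mu>) k * inner (m (X \<omega>)) g)"
    by (rule integral_mult_cond_exp_given[OF X m integrable_of_square_integrable[OF U U2]
          integrable_of_square_integrable[OF mX mX2] f fU])
  also have "\<dots> = inner (cross_cov M (\<lambda>\<omega>. \<phi> (X \<omega>)) (\<lambda>\<omega>. m (X \<omega>)) g) k"
    by (simp add: cross_cov_inner_uncentered[OF V V2 mX mX2] mult.commute)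
  finally show "inner (cross_cov M (\<lambda>\<omega>. \<phi> (X \<omega>)) U g) k
      = inner (cross_cov M (\<lambda>\<omega>. \<phi> (X \<omega>)) (\<lambda>\<omega>. m (X \<omega>)) g) k" .
qed

end

theorem mainTheorem17:
  fixes M :: "'w measure" and Mx :: "'x measure" and My :: "'y measure"
    and X :: "'w \<Rightarrow> 'x" and Y :: "'w \<Rightarrow> 'y"
    and \<phi> :: "'x \<Rightarrow> 'h::{real_inner,banach,second_countable_topology}"
    and \<psi> :: "'y \<Rightarrow> 'g::{real_inner,banach,second_countable_topology}"
    and m :: "'x \<Rightarrow> 'g"
  assumes P: "prob_space M"
    and X_meas: "X \<in> measurable M Mx" and Y_meas: "Y \<in> measurable M My"
    and k_meas: "(\<lambda>(x, x'). inner (\<phi> x) (\<phi> x')) \<in> borel_measurable (Mx \<Otimes>\<^sub>M Mx)"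
    and l_meas: "(\<lambda>(y, y'). inner (\<psi> y) (\<psi> y')) \<in> borel_measurable (My \<Otimes>\<^sub>M My)"
    and H_rkhs: "closure (span (range \<phi>)) = UNIV"
    and G_rkhs: "closure (span (range \<psi>)) = UNIV"
    and \<phi>_inj: "inj \<phi>"
    and V_L2: "(\<lambda>\<omega>. \<phi> (X \<omega>)) \<in> borel_measurable M" "integrable M (\<lambda>\<omega>. (norm (\<phi> (X \<omega>)))\<^sup>2)"
    and U_L2: "(\<lambda>\<omega>. \<psi> (Y \<omega>)) \<in> borel_measurable M" "integrable M (\<lambda>\<omega>. (norm (\<psi> (Y \<omega>)))\<^sup>2)"
    and H_ae: "\<And>h. (AE x in distr M Mx X. inner h (\<phi> x) = 0) \<Longrightarrow> h = 0"
    and m_cond: "is_cond_exp_given M Mx X (\<lambda>\<omega>. \<psi> (Y \<omega>)) m"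
    and m_L2: "integrable (distr M Mx X) (\<lambda>x. (norm (m x))\<^sup>2)"
    and B: "\<exists>F c. hilbert_schmidt F \<and> (AE x in distr M Mx X. m x = F (\<phi> x) + c)"
  shows "(\<forall>g. cross_cov M (\<lambda>\<omega>. \<phi> (X \<omega>)) (\<lambda>\<omega>. \<psi> (Y \<omega>)) g
                \<in> mp_dom (cross_cov M (\<lambda>\<omega>. \<phi> (X \<omega>)) (\<lambda>\<omega>. \<phi> (X \<omega>))))
       \<and> bounded_linear (\<lambda>g. mp_inv (cross_cov M (\<lambda>\<omega>. \<phi> (X \<omega>)) (\<lambda>\<omega>. \<phi> (X \<omega>)))
                                 (cross_cov M (\<lambda>\<omega>. \<phi> (X \<omega>)) (\<lambda>\<omega>. \<psi> (Y \<omega>)) g))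
       \<and> (AE \<omega> in M. m (X \<omega>) =
             (LINT \<omega>'|M. \<psi> (Y \<omega>'))
             + adjoint (\<lambda>g. mp_inv (cross_cov M (\<lambda>\<omega>. \<phi> (X \<omega>)) (\<lambda>\<omega>. \<phi> (X \<omega>)))
                                   (cross_cov M (\<lambda>\<omega>. \<phi> (X \<omega>)) (\<lambda>\<omega>. \<psi> (Y \<omega>)) g))
                       (\<phi> (X \<omega>) - (LINT \<omega>'|M. \<phi> (X \<omega>'))))"
proof -
  interpret prob_space M by (rule P)
  let ?V = "\<lambda>\<omega>. \<phi> (X \<omega>)" and ?U = "\<lambda>\<omega>. \<psi> (Y \<omega>)" and ?W = "\<lambda>\<omega>. m (X \<omega>)"
  let ?C = "cross_cov M ?V ?V"
  let ?T = "\<lambda>g. mp_inv ?C (cross_cov M ?V ?U g)"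
  obtain F c where F: "bounded_linear F" and m_affine: "AE x in distr M Mx X. m x = F (\<phi> x) + c"
    using B by (auto simp: hilbert_schmidt_def)
  have "m \<in> borel_measurable Mx" using m_cond by (simp add: is_cond_exp_given_def)
  then have W: "?W \<in> borel_measurable M" and W2: "integrable M (\<lambda>\<omega>. (norm (?W \<omega>))\<^sup>2)"
    using X_meas m_L2 by (simp_all add: integrable_distr_eq)
  have W_affine: "AE \<omega> in M. ?W \<omega> = F (?V \<omega>) + c" by (rule AE_distrD[OF X_meas m_affine])
  have C_VU: "cross_cov M ?V ?U g = ?C (adjoint F g)" for g
    using cross_cov_cond_exp_given[OF X_meas m_cond inner_feature_measurable[OF k_meas] V_L2 U_L2 W2]
      cross_cov_affine[OF V_L2 W W2 F W_affine] by simp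
  note T = mp_inv_comp_adjoint[OF bounded_linear_cross_cov[OF V_L2 V_L2] F, folded C_VU]
  note kernel = bounded_linear_kernel[OF bounded_linear_cross_cov[OF V_L2 V_L2]]
  have mean: "expectation ?U = F (expectation ?V) + c"
    using integral_cond_exp_given[OF X_meas m_cond]
      integral_affine_AE[OF F integrable_of_square_integrable[OF V_L2] W W_affine] by simp
  from cross_cov_kernel_AE_orthogonal[OF V_L2] W_affine
  have "AE \<omega> in M. ?W \<omega> = expectation ?U + adjoint ?T (?V \<omega> - expectation ?V)"
  proof eventually_elim
    case (elim \<omega>)
    then show ?case
      by (simp add: T(2) orth_proj_orthogonal_comp[OF kernel] mean linear_diff[OF bounded_linear.linear[OF F]]
          linear_0[OF bounded_linear.linear[OF F]])
  qed
  moreover have "cross_cov M ?V ?U g \<in> mp_dom ?C" for g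
    using mp_dom_range unfolding C_VU by blast
  ultimately show ?thesis using T(1) by blast
qed

end
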